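(* Let $u$ be a smooth, nowhere vanishing solution of the DNLS equation $\mathrm{i}u_t+u_{xx}+2\mathrm{i}(|u|^2u)_x=0$, and let $s_1,\alpha_4\in\mathbb{R}$ be such that $\mathbf{L}=-\frac{\mathrm{i}}{8}\mathbf{V}(\mathbf{Q};\lambda)+\frac{\mathrm{i}s_1}{4}\mathbf{U}(\mathbf{Q};\lambda)+\alpha_4\sigma_3$ satisfies $\mathbf{L}_x=[\mathbf{U},\mathbf{L}]$, $\mathbf{L}_t=[\mathbf{V},\mathbf{L}]$ for all $\lambda$. Then $\det\mathbf{L}$ is independent of $(x,t)$ and has the form $\det\mathbf{L}=P(\lambda)=-\lambda^8+s_1\lambda^6-s_2\lambda^4+s_3\lambda^2-s_4$ for constants $s_2,s_3,s_4\in\mathbb{R}$, and $\nu=|u|^2$, viewed as a function of $\xi=x+2s_1t$, satisfies $$\nu_\xi^2=-R(\nu),$$ where $$R(\nu)=\nu^4+4s_1\nu^3+(6s_1^2-8s_2+48\alpha_4)\nu^2+(4s_1^3-16s_1s_2+64s_3+32s_1\alpha_4)\nu+(-s_1^2+4s_2+8\alpha_4)^2.$$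
   Context: $\sigma_3=\mathrm{diag}(1,-1)$, $\mathbf{Q}=\begin{pmatrix}0&\mathrm{i}u\\ \mathrm{i}u^*&0\end{pmatrix}$, $\mathbf{U}(\mathbf{Q};\lambda)=-2\mathrm{i}\sigma_3\lambda^2+2\mathbf{Q}\lambda$, $\mathbf{V}(\mathbf{Q};\lambda)=(4\lambda^2+2\mathbf{Q}^2)\mathbf{U}(\mathbf{Q};\lambda)+2\mathrm{i}\sigma_3\mathbf{Q}_x\lambda$ (the DNLS Lax pair). *)

theory Defs
  imports "HOL-Analysis.Analysis"
begin

definition px :: "(real \<times> real \<Rightarrow> complex) \<Rightarrow> real \<times> real \<Rightarrow> complex" where
  "px f = (\<lambda>(x, t). vector_derivative (\<lambda>y. f (y, t)) (at x))"

definition pt :: "(real \<times> real \<Rightarrow> complex) \<Rightarrow> real \<times> real \<Rightarrow> complex" where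
  "pt f = (\<lambda>(x, t). vector_derivative (\<lambda>s. f (x, s)) (at t))"

text \<open>Iterated partial derivative; True = d/dx, False = d/dt.\<close>
fun pd :: "bool list \<Rightarrow> (real \<times> real \<Rightarrow> complex) \<Rightarrow> real \<times> real \<Rightarrow> complex" where
  "pd [] f = f"
| "pd (True # ds) f = px (pd ds f)"
| "pd (False # ds) f = pt (pd ds f)"

definition smooth2 :: "(real \<times> real \<Rightarrow> complex) \<Rightarrow> bool" where
  "smooth2 f \<longleftrightarrow> (\<forall>ds. continuous_on UNIV (pd ds f) \<and>
     (\<forall>x t. (\<lambda>y. pd ds f (y, t)) differentiable (at x) \<and>
            (\<lambda>s. pd ds f (x, s)) differentiable (at t)))"

type_synonym cmat = "complex^2^2"

definition mat2 :: "complex \<Rightarrow> complex \<Rightarrow> complex \<Rightarrow> complex \<Rightarrow> cmat" where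
  "mat2 a b c d = (\<chi> i j. if i = 1 then (if j = 1 then a else b) else (if j = 1 then c else d))"

definition msc :: "complex \<Rightarrow> cmat \<Rightarrow> cmat" where
  "msc c A = (\<chi> i j. c * A $ i $ j)"

definition sigma3 :: cmat where
  "sigma3 = mat2 1 0 0 (-1)"

definition Qm :: "complex \<Rightarrow> cmat" where
  "Qm w = mat2 0 (\<i> * w) (\<i> * cnj w) 0"

definition Ulax :: "cmat \<Rightarrow> complex \<Rightarrow> cmat" where
  "Ulax Q lam = msc (-2 * \<i> * lam^2) sigma3 + msc (2 * lam) Q"

definition Vlax :: "cmat \<Rightarrow> cmat \<Rightarrow> complex \<Rightarrow> cmat" where
  "Vlax Q Qx lam = (mat (4 * lam^2) + msc 2 (Q ** Q)) ** Ulax Q lam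
                   + msc (2 * \<i> * lam) (sigma3 ** Qx)"

definition Lmat :: "(real \<Rightarrow> real \<Rightarrow> complex) \<Rightarrow> real \<Rightarrow> real \<Rightarrow> real \<Rightarrow> real \<Rightarrow> complex \<Rightarrow> cmat" where
  "Lmat u s1 a4 x t lam =
     msc (- \<i> / 8) (Vlax (Qm (u x t)) (Qm (vector_derivative (\<lambda>y. u y t) (at x))) lam)
     + msc (\<i> * of_real s1 / 4) (Ulax (Qm (u x t)) lam)
     + msc (of_real a4) sigma3"

definition dnls :: "(real \<Rightarrow> real \<Rightarrow> complex) \<Rightarrow> bool" where
  "dnls u \<longleftrightarrow> (\<forall>x t.
     \<i> * vector_derivative (\<lambda>s. u x s) (at t)
     + vector_derivative (\<lambda>y. vector_derivative (\<lambda>z. u z t) (at y)) (at x)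
     + 2 * \<i> * vector_derivative (\<lambda>y. of_real ((cmod (u y t))^2) * u y t) (at x) = 0)"

definition Rpoly :: "real \<Rightarrow> real \<Rightarrow> real \<Rightarrow> real \<Rightarrow> real \<Rightarrow> real" where
  "Rpoly s1 s2 s3 a4 nu =
     nu^4 + 4* s1* nu^3 + (6* s1^2 - 8* s2 + 48* a4)* nu^2
     + (4* s1^3 - 16* s1* s2 + 64* s3 + 32* s1* a4)* nu + (4 * s2 + 8 * a4 - s1^2)^2"

end

theory Submission
  imports Defs
begin

text \<open>
  The Lax equation L_x = [U, L] makes det L constant in x: for 2x2 matrices the derivative of
  the determinant is bilinear in L and L', and it vanishes when L' is a commutator with L; the
  same holds in t. Expanding det L in lam, the coefficients s2 and s3 are explicit in
  nu = |u|^2, Im (cnj u * u_x) and |u_x|^2 (and s4 = a4^2), so the identity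
  nu_x^2 = 4 nu |u_x|^2 - 4 Im (cnj u * u_x)^2 turns into nu_x^2 = - R(nu). Finally the (1,1)
  entry of L_t = [V, L] at lam = 1 reads nu_t = 2 s1 nu_x, so nu is constant along the lines
  x + 2 s1 t = const.
\<close>

lemma mat2_nth [simp]:
  "mat2 a b c d $ 1 $ 1 = a" "mat2 a b c d $ 1 $ 2 = b"
  "mat2 a b c d $ 2 $ 1 = c" "mat2 a b c d $ 2 $ 2 = d"
  by (simp_all add: mat2_def)

lemma msc_nth [simp]: "msc c A $ i $ j = c * A $ i $ j"
  by (simp add: msc_def)

lemma cmat_mult_nth: "((A::cmat) ** B) $ i $ j = A$i$1 * B$1$j + A$i$2 * B$2$j"
  by (simp add: matrix_matrix_mult_def sum_2)

lemma cmat_eq_iff: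
  "(A::cmat) = B \<longleftrightarrow> A$1$1 = B$1$1 \<and> A$1$2 = B$1$2 \<and> A$2$1 = B$2$1 \<and> A$2$2 = B$2$2"
  by (auto simp: vec_eq_iff forall_2)

lemma bounded_linear_msc: "bounded_linear (\<lambda>c. msc c A)"
proof -
  have "linear (\<lambda>c. msc c A)"
    by (rule linearI) (simp_all add: cmat_eq_iff ring_distribs mult_scaleR_left)
  then show ?thesis
    by (simp add: linear_conv_bounded_linear)
qed

lemma bounded_linear_cmat_nth: "bounded_linear (\<lambda>A::cmat. A $ i $ j)"
  by (rule bounded_linear_compose[of "\<lambda>v::complex^2. v $ j" "\<lambda>A::cmat. A $ i"])
     (rule bounded_linear_vec_nth)+

lemma has_vector_derivative_mat2:
  assumes "(a has_vector_derivative a') F" "(b has_vector_derivative b') F"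
    "(c has_vector_derivative c') F" "(d has_vector_derivative d') F"
  shows "((\<lambda>r. mat2 (a r) (b r) (c r) (d r)) has_vector_derivative mat2 a' b' c' d') F"
proof -
  have split: "mat2 p q r s = msc p (mat2 1 0 0 0) + msc q (mat2 0 1 0 0)
      + msc r (mat2 0 0 1 0) + msc s (mat2 0 0 0 1)" for p q r s
    by (simp add: cmat_eq_iff)
  show ?thesis
    unfolding split[of "a _"] split[of a']
    by (intro has_vector_derivative_add bounded_linear.has_vector_derivative[OF bounded_linear_msc] assms)
qed

lemma has_vector_derivative_det_commutator:
  fixes L :: "real \<Rightarrow> cmat"
  assumes L': "(L has_vector_derivative U ** L r - L r ** U) (at r)"
  shows "((\<lambda>r. det (L r)) has_vector_derivative 0) (at r)"
proof -
  define D where "D = U ** L r - L r ** U"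
  have entries: "((\<lambda>r. L r $ i $ j) has_vector_derivative D $ i $ j) (at r)" for i j
    using bounded_linear.has_vector_derivative[OF bounded_linear_cmat_nth L'] by (simp add: D_def)
  have "((\<lambda>r. det (L r)) has_vector_derivative
      D$1$1 * L r$2$2 + L r$1$1 * D$2$2 - D$1$2 * L r$2$1 - L r$1$2 * D$2$1) (at r)"
    unfolding det_2
    by (rule has_vector_derivative_eq_rhs, (rule derivative_intros entries)+) (simp add: algebra_simps)
  moreover have "D$1$1 * L r$2$2 + L r$1$1 * D$2$2 - D$1$2 * L r$2$1 - L r$1$2 * D$2$1 = 0"
    by (simp add: D_def cmat_mult_nth algebra_simps)
  ultimately show ?thesis
    by simp
qed

lemma has_real_derivative_cmod_power2:
  assumes "(g has_vector_derivative g') (at r)"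
  shows "((\<lambda>r. (cmod (g r))^2) has_real_derivative 2 * Re (cnj (g r) * g')) (at r)"
proof -
  have "((\<lambda>r. g r * cnj (g r)) has_vector_derivative g r * cnj g' + g' * cnj (g r)) (at r)"
    by (intro has_vector_derivative_mult has_vector_derivative_cnj assms)
  then have "((\<lambda>r. Re (g r * cnj (g r))) has_vector_derivative Re (g r * cnj g' + g' * cnj (g r))) (at r)"
    by (rule bounded_linear.has_vector_derivative[OF bounded_linear_Re])
  then show ?thesis
    by (simp add: complex_mult_cnj cmod_power2 has_real_derivative_iff_has_vector_derivative
        algebra_simps)
qed

lemma transport_along_characteristics:
  fixes N Nx Nt :: "real \<Rightarrow> real \<Rightarrow> real" and c :: real
  assumes Nx: "\<And>x t. ((\<lambda>y. N y t) has_real_derivative Nx x t) (at x)"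
    and Nt: "\<And>x t. ((\<lambda>s. N x s) has_real_derivative Nt x t) (at t)"
    and Nt_cont: "continuous_on UNIV (\<lambda>p. Nt (fst p) (snd p))"
    and transport: "\<And>x t. Nt x t = c * Nx x t"
  shows "N x t = N (x + c * t) 0"
proof -
  have N': "((\<lambda>(x, t). N x t) has_derivative (\<lambda>(hx, ht). Nx x t * hx + Nt x t * ht)) (at (x, t))"
    for x t
  proof -
    have "isCont (\<lambda>p. blinfun_mult_right (Nt (fst p) (snd p))) (x, t)"
      using Nt_cont by (intro bounded_linear.continuous[OF bounded_linear_blinfun_mult_right])
        (simp add: continuous_on_eq_continuous_at)
    then have "((\<lambda>(x, t). N x t) has_derivative
        (\<lambda>(hx, ht). Nx x t * hx + blinfun_mult_right (Nt x t) ht)) (at (x, t) within UNIV \<times> UNIV)"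
      using Nx Nt by (intro has_derivative_partialsI) (auto simp: has_field_derivative_def split_def)
    then show ?thesis
      by simp
  qed
  define \<xi> where "\<xi> = x + c * t"
  define \<phi> where "\<phi> = (\<lambda>s. N (\<xi> - c * s) s)"
  have "(\<phi> has_derivative (\<lambda>h. 0)) (at s within UNIV)" for s
  proof -
    have "((\<lambda>s. (\<xi> - c * s, s)) has_derivative (\<lambda>h. (- (c * h), h))) (at s)"
      by (auto intro!: derivative_eq_intros)
    from has_derivative_compose[OF this N']
    show ?thesis
      by (simp add: \<phi>_def transport algebra_simps)
  qed
  then obtain k where "\<phi> s = k" for s
    using has_derivative_zero_constant[OF convex_UNIV] by blast
  then have "\<phi> t = \<phi> 0"
    by simp
  then show ?thesis
    by (simp add: \<phi>_def \<xi>_def)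
qed

definition lax_L :: "complex \<Rightarrow> complex \<Rightarrow> real \<Rightarrow> real \<Rightarrow> complex \<Rightarrow> cmat" where
  "lax_L w wx s1 a4 lam = mat2
    (- (lam^4) + (w * cnj w + of_real s1) / 2 * lam^2 + of_real a4)
    (lam * ((lam^2 - (w * cnj w + of_real s1) / 2) * w + \<i> * wx / 4))
    (lam * ((lam^2 - (w * cnj w + of_real s1) / 2) * cnj w - \<i> * cnj wx / 4))
    (lam^4 - (w * cnj w + of_real s1) / 2 * lam^2 - of_real a4)"

lemma Lmat_eq_lax_L:
  "Lmat u s1 a4 x t lam = lax_L (u x t) (vector_derivative (\<lambda>y. u y t) (at x)) s1 a4 lam"
  unfolding Lmat_def lax_L_def cmat_eq_iff
  by (simp add: Vlax_def Ulax_def Qm_def sigma3_def cmat_mult_nth mat_def algebra_simps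
      power2_eq_square power4_eq_xxxx power3_eq_cube)

definition lax_L_deriv :: "complex \<Rightarrow> complex \<Rightarrow> complex \<Rightarrow> complex \<Rightarrow> real \<Rightarrow> complex \<Rightarrow> cmat" where
  "lax_L_deriv w w' wx wx' s1 lam = mat2
    ((w' * cnj w + w * cnj w') / 2 * lam^2)
    (lam * (- (w' * cnj w + w * cnj w') / 2 * w
            + (lam^2 - (w * cnj w + of_real s1) / 2) * w' + \<i> * wx' / 4))
    (lam * (- (w' * cnj w + w * cnj w') / 2 * cnj w
            + (lam^2 - (w * cnj w + of_real s1) / 2) * cnj w' - \<i> * cnj wx' / 4))
    (- (w' * cnj w + w * cnj w') / 2 * lam^2)"

lemma has_vector_derivative_lax_L:
  assumes "(w has_vector_derivative w') (at r)" "(wx has_vector_derivative wx') (at r)"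
  shows "((\<lambda>r. lax_L (w r) (wx r) s1 a4 lam) has_vector_derivative
      lax_L_deriv (w r) w' (wx r) wx' s1 lam) (at r)"
  unfolding lax_L_def lax_L_deriv_def
  by (rule has_vector_derivative_mat2;
      rule has_vector_derivative_eq_rhs, (rule derivative_intros assms)+, simp add: field_simps)

definition lax_s2 :: "complex \<Rightarrow> complex \<Rightarrow> real \<Rightarrow> real \<Rightarrow> real" where
  "lax_s2 w wx s1 a4 =
    (((cmod w)^2 + s1) / 2)^2 - 2 * a4 - ((cmod w)^2 + s1) * (cmod w)^2 - Im (cnj w * wx) / 2"

definition lax_s3 :: "complex \<Rightarrow> complex \<Rightarrow> real \<Rightarrow> real \<Rightarrow> real" where
  "lax_s3 w wx s1 a4 =
    - ((cmod w)^2 + s1) * a4 - (cmod w)^2 * (((cmod w)^2 + s1) / 2)^2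
    - Im (cnj w * wx) * ((cmod w)^2 + s1) / 4 - (cmod wx)^2 / 16"

lemma det_lax_L:
  "det (lax_L w wx s1 a4 lam) = - (lam^8) + of_real s1 * lam^6 - of_real (lax_s2 w wx s1 a4) * lam^4
      + of_real (lax_s3 w wx s1 a4) * lam^2 - of_real (a4^2)"
proof -
  define n where "n = (cmod w)^2"
  define p where "p = Im (cnj w * wx)"
  define k where "k = (cmod wx)^2"
  have n: "w * cnj w = of_real n" and k: "wx * cnj wx = of_real k"
    by (simp_all add: n_def k_def complex_mult_cnj cmod_power2)
  have p: "\<i> * (cnj w * wx - w * cnj wx) / 4 = of_real (- p / 2)"
    by (simp add: p_def complex_eq_iff field_simps)
  have s2: "lax_s2 w wx s1 a4 = ((n + s1) / 2)^2 - 2 * a4 - (n + s1) * n - p / 2"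
    and s3: "lax_s3 w wx s1 a4 = - (n + s1) * a4 - n * ((n + s1) / 2)^2 - p * (n + s1) / 4 - k / 16"
    unfolding lax_s2_def lax_s3_def n_def[symmetric] k_def[symmetric] p_def[symmetric] by simp_all
  define c where "c = (of_real n + of_real s1) / (2 :: complex)"
  have "det (lax_L w wx s1 a4 lam) = (- (lam^4) + c * lam^2 + of_real a4) * (lam^4 - c * lam^2 - of_real a4)
      - (lam * ((lam^2 - c) * w + \<i> * wx / 4)) * (lam * ((lam^2 - c) * cnj w - \<i> * cnj wx / 4))"
    unfolding det_2 lax_L_def c_def n by simp
  also have "\<dots> = - ((lam^4 - c * lam^2 - of_real a4)^2)
      - lam^2 * ((lam^2 - c)^2 * (w * cnj w) + (lam^2 - c) * (\<i> * (cnj w * wx - w * cnj wx) / 4)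
                 + wx * cnj wx / 16)"
    by (simp add: field_simps power2_eq_square power4_eq_xxxx)
  also have "\<dots> = - (lam^8) + of_real s1 * lam^6 - of_real (lax_s2 w wx s1 a4) * lam^4
      + of_real (lax_s3 w wx s1 a4) * lam^2 - of_real (a4^2)"
    unfolding n p k c_def s2 s3 of_real_add of_real_mult of_real_diff of_real_divide of_real_power
      of_real_minus of_real_numeral
    by (simp add: field_simps) algebra
  finally show ?thesis .
qed

lemma Vlax_Qm:
  "Vlax (Qm w) (Qm wx) lam = mat2
    ((4 * lam^2 - 2 * (w * cnj w)) * (-2 * \<i> * lam^2))
    ((4 * lam^2 - 2 * (w * cnj w)) * (2 * \<i> * lam * w) - 2 * lam * wx)
    ((4 * lam^2 - 2 * (w * cnj w)) * (2 * \<i> * lam * cnj w) + 2 * lam * cnj wx)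
    (- (4 * lam^2 - 2 * (w * cnj w)) * (-2 * \<i> * lam^2))"
  unfolding cmat_eq_iff
  by (simp add: Vlax_def Ulax_def Qm_def sigma3_def cmat_mult_nth mat_def algebra_simps)

lemma commutator_Vlax_lax_L_11:
  "(Vlax (Qm w) (Qm wx) lam ** lax_L w wx s1 a4 lam - lax_L w wx s1 a4 lam ** Vlax (Qm w) (Qm wx) lam) $ 1 $ 1
    = lam^2 * of_real s1 * (wx * cnj w + w * cnj wx)"
  unfolding Vlax_Qm lax_L_def by (simp add: cmat_mult_nth field_simps power2_eq_square)

lemma spectral_poly_coeffs_eq:
  fixes s a b a' b' c :: real
  assumes "\<And>lam::complex. - (lam^8) + of_real s * lam^6 - of_real a * lam^4 + of_real b * lam^2 - of_real c
     = - (lam^8) + of_real s * lam^6 - of_real a' * lam^4 + of_real b' * lam^2 - of_real c"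
  shows "a = a'" and "b = b'"
proof -
  from assms[of 1] have "of_real (b - a) = (of_real (b' - a') :: complex)"
    by (simp add: algebra_simps)
  moreover from assms[of 2] have "of_real (4 * b - 16 * a) = (of_real (4 * b' - 16 * a') :: complex)"
    by (simp add: algebra_simps)
  ultimately show "a = a'" and "b = b'"
    unfolding of_real_eq_iff by linarith+
qed

lemma cmod_power2_deriv_sq_eq_Rpoly:
  "(2 * Re (cnj w * wx))^2 = - Rpoly s1 (lax_s2 w wx s1 a4) (lax_s3 w wx s1 a4) a4 ((cmod w)^2)"
proof -
  define p where "p = cnj w * wx"
  have "(Re p)^2 + (Im p)^2 = (cmod w)^2 * (cmod wx)^2"
    using cmod_power2[of p] by (simp add: p_def norm_mult power_mult_distrib)
  then have "(2 * Re p)^2 = 4 * ((cmod w)^2 * (cmod wx)^2 - (Im p)^2)"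
    by (simp add: power_mult_distrib)
  then show ?thesis
    unfolding Rpoly_def lax_s2_def lax_s3_def p_def[symmetric]
    by (simp add: algebra_simps power2_eq_square power3_eq_cube power4_eq_xxxx divide_simps)
qed

locale dnls_lax_field =
  fixes u :: "real \<Rightarrow> real \<Rightarrow> complex" and s1 a4 :: real
  assumes smooth: "smooth2 (\<lambda>(x, t). u x t)"
    and lax_x: "\<forall>lam x t. vector_derivative (\<lambda>y. Lmat u s1 a4 y t lam) (at x)
        = Ulax (Qm (u x t)) lam ** Lmat u s1 a4 x t lam
          - Lmat u s1 a4 x t lam ** Ulax (Qm (u x t)) lam"
    and lax_t: "\<forall>lam x t. vector_derivative (\<lambda>s. Lmat u s1 a4 x s lam) (at t)
        = Vlax (Qm (u x t)) (Qm (vector_derivative (\<lambda>y. u y t) (at x))) lam ** Lmat u s1 a4 x t lam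
          - Lmat u s1 a4 x t lam ** Vlax (Qm (u x t)) (Qm (vector_derivative (\<lambda>y. u y t) (at x))) lam"
begin

definition ux :: "real \<Rightarrow> real \<Rightarrow> complex" where
  "ux x t = vector_derivative (\<lambda>y. u y t) (at x)"

definition ut :: "real \<Rightarrow> real \<Rightarrow> complex" where
  "ut x t = vector_derivative (\<lambda>s. u x s) (at t)"

lemma pd_u:
  "pd [] (\<lambda>(x, t). u x t) = (\<lambda>(x, t). u x t)"
  "pd [True] (\<lambda>(x, t). u x t) = (\<lambda>(x, t). ux x t)"
  "pd [False] (\<lambda>(x, t). u x t) = (\<lambda>(x, t). ut x t)"
  by (simp_all add: px_def pt_def ux_def ut_def)

lemma smooth_pd:
  "continuous_on UNIV (pd ds (\<lambda>(x, t). u x t))"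
  "(\<lambda>y. pd ds (\<lambda>(x, t). u x t) (y, t)) differentiable (at x)"
  "(\<lambda>s. pd ds (\<lambda>(x, t). u x t) (x, s)) differentiable (at t)"
  using smooth unfolding smooth2_def by blast+

lemma has_vector_derivative_u_x: "((\<lambda>y. u y t) has_vector_derivative ux x t) (at x)"
  and has_vector_derivative_u_t: "((\<lambda>s. u x s) has_vector_derivative ut x t) (at t)"
  using smooth_pd(2,3)[of "[]"] by (simp_all add: pd_u ux_def ut_def vector_derivative_works)

lemma has_vector_derivative_ux_x:
    "((\<lambda>y. ux y t) has_vector_derivative vector_derivative (\<lambda>y. ux y t) (at x)) (at x)"
  and has_vector_derivative_ux_t:
    "((\<lambda>s. ux x s) has_vector_derivative vector_derivative (\<lambda>s. ux x s) (at t)) (at t)"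
  using smooth_pd(2,3)[of "[True]", unfolded pd_u] by (simp_all add: vector_derivative_works)

lemma continuous_on_u: "continuous_on UNIV (\<lambda>p. u (fst p) (snd p))"
  and continuous_on_ut: "continuous_on UNIV (\<lambda>p. ut (fst p) (snd p))"
  using smooth_pd(1)[of "[]", unfolded pd_u] smooth_pd(1)[of "[False]", unfolded pd_u]
  by (simp_all add: case_prod_beta')

lemma Lmat_eq: "Lmat u s1 a4 x t lam = lax_L (u x t) (ux x t) s1 a4 lam"
  by (simp add: Lmat_eq_lax_L ux_def)

lemma has_vector_derivative_Lmat_x:
  "((\<lambda>y. Lmat u s1 a4 y t lam) has_vector_derivative
     Ulax (Qm (u x t)) lam ** Lmat u s1 a4 x t lam - Lmat u s1 a4 x t lam ** Ulax (Qm (u x t)) lam) (at x)"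
proof -
  have "((\<lambda>y. Lmat u s1 a4 y t lam) has_vector_derivative
      lax_L_deriv (u x t) (ux x t) (ux x t) (vector_derivative (\<lambda>y. ux y t) (at x)) s1 lam) (at x)"
    unfolding Lmat_eq by (rule has_vector_derivative_lax_L[OF has_vector_derivative_u_x has_vector_derivative_ux_x])
  with lax_x show ?thesis
    by (metis vector_derivative_at)
qed

lemma has_vector_derivative_Lmat_t:
  "((\<lambda>s. Lmat u s1 a4 x s lam) has_vector_derivative
     lax_L_deriv (u x t) (ut x t) (ux x t) (vector_derivative (\<lambda>s. ux x s) (at t)) s1 lam) (at t)"
  and commutator_Vlax_Lmat:
  "lax_L_deriv (u x t) (ut x t) (ux x t) (vector_derivative (\<lambda>s. ux x s) (at t)) s1 lam
     = Vlax (Qm (u x t)) (Qm (ux x t)) lam ** Lmat u s1 a4 x t lam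
       - Lmat u s1 a4 x t lam ** Vlax (Qm (u x t)) (Qm (ux x t)) lam"
proof -
  show L': "((\<lambda>s. Lmat u s1 a4 x s lam) has_vector_derivative
     lax_L_deriv (u x t) (ut x t) (ux x t) (vector_derivative (\<lambda>s. ux x s) (at t)) s1 lam) (at t)"
    unfolding Lmat_eq by (rule has_vector_derivative_lax_L[OF has_vector_derivative_u_t has_vector_derivative_ux_t])
  with lax_t show "lax_L_deriv (u x t) (ut x t) (ux x t) (vector_derivative (\<lambda>s. ux x s) (at t)) s1 lam
     = Vlax (Qm (u x t)) (Qm (ux x t)) lam ** Lmat u s1 a4 x t lam
       - Lmat u s1 a4 x t lam ** Vlax (Qm (u x t)) (Qm (ux x t)) lam"
    unfolding ux_def by (metis vector_derivative_at)
qed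

lemma det_Lmat_const: "det (Lmat u s1 a4 x t lam) = det (Lmat u s1 a4 0 0 lam)"
proof -
  obtain c where "det (Lmat u s1 a4 y t lam) = c" for y
    using has_vector_derivative_det_commutator[OF has_vector_derivative_Lmat_x]
    by (rule has_vector_derivative_zero_constant[OF convex_UNIV]) blast
  moreover obtain d where "det (Lmat u s1 a4 0 s lam) = d" for s
    using has_vector_derivative_det_commutator[OF has_vector_derivative_Lmat_t[unfolded commutator_Vlax_Lmat]]
    by (rule has_vector_derivative_zero_constant[OF convex_UNIV]) blast
  ultimately show ?thesis
    by metis
qed

lemma lax_s2_const: "lax_s2 (u x t) (ux x t) s1 a4 = lax_s2 (u 0 0) (ux 0 0) s1 a4"
  and lax_s3_const: "lax_s3 (u x t) (ux x t) s1 a4 = lax_s3 (u 0 0) (ux 0 0) s1 a4"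
  using spectral_poly_coeffs_eq[OF det_Lmat_const[of x t, unfolded Lmat_eq det_lax_L]] .

lemma transport_equation_cmod_u_power2:
  "Re (cnj (u x t) * ut x t) = 2 * s1 * Re (cnj (u x t) * ux x t)"
proof -
  have "(ut x t * cnj (u x t) + u x t * cnj (ut x t)) / 2
      = of_real s1 * (ux x t * cnj (u x t) + u x t * cnj (ux x t))"
    using commutator_Vlax_Lmat[of x t 1, unfolded cmat_eq_iff Lmat_eq, THEN conjunct1]
    by (simp only: commutator_Vlax_lax_L_11) (simp add: lax_L_deriv_def)
  then have "Re ((ut x t * cnj (u x t) + u x t * cnj (ut x t)) / 2) = Re (of_real s1 * (ux x t * cnj (u x t) + u x t * cnj (ux x t)))"
    by simp
  then show ?thesis
    by (simp add: algebra_simps)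
qed

lemma cmod_u_power2_travelling: "(cmod (u x t))^2 = (cmod (u (x + 2 * s1 * t) 0))^2"
proof (rule transport_along_characteristics)
  show "((\<lambda>y. (cmod (u y t))^2) has_real_derivative 2 * Re (cnj (u x t) * ux x t)) (at x)" for x t
    by (rule has_real_derivative_cmod_power2[OF has_vector_derivative_u_x])
  show "((\<lambda>s. (cmod (u x s))^2) has_real_derivative 2 * Re (cnj (u x t) * ut x t)) (at t)" for x t
    by (rule has_real_derivative_cmod_power2[OF has_vector_derivative_u_t])
  show "continuous_on UNIV (\<lambda>p. 2 * Re (cnj (u (fst p) (snd p)) * ut (fst p) (snd p)))"
    by (intro continuous_intros continuous_on_u continuous_on_ut)
  show "2 * Re (cnj (u x t) * ut x t) = 2 * s1 * (2 * Re (cnj (u x t) * ux x t))" for x t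
    using transport_equation_cmod_u_power2 by simp
qed

end

theorem mainTheorem5:
  fixes u :: "real \<Rightarrow> real \<Rightarrow> complex" and s1 a4 :: real
  assumes smooth: "smooth2 (\<lambda>(x, t). u x t)"
    and nonvanishing: "\<forall>x t. u x t \<noteq> 0"
    and dnls: "dnls u"
    and lax_x: "\<forall>lam x t. vector_derivative (\<lambda>y. Lmat u s1 a4 y t lam) (at x)
        = Ulax (Qm (u x t)) lam ** Lmat u s1 a4 x t lam
          - Lmat u s1 a4 x t lam ** Ulax (Qm (u x t)) lam"
    and lax_t: "\<forall>lam x t. vector_derivative (\<lambda>s. Lmat u s1 a4 x s lam) (at t)
        = Vlax (Qm (u x t)) (Qm (vector_derivative (\<lambda>y. u y t) (at x))) lam ** Lmat u s1 a4 x t lam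
          - Lmat u s1 a4 x t lam ** Vlax (Qm (u x t)) (Qm (vector_derivative (\<lambda>y. u y t) (at x))) lam"
  shows "\<exists>s2 s3 s4 :: real.
     (\<forall>x t lam. det (Lmat u s1 a4 x t lam)
        = - (lam^8) + of_real s1 * lam^6 - of_real s2 * lam^4 + of_real s3 * lam^2 - of_real s4)
   \<and> (\<exists>f :: real \<Rightarrow> real.
        (\<forall>x t. (cmod (u x t))^2 = f (x + 2 * s1 * t))
      \<and> (\<forall>\<xi>. f differentiable (at \<xi>) \<and> (deriv f \<xi>)^2 = - Rpoly s1 s2 s3 a4 (f \<xi>)))"
proof -
  interpret dnls_lax_field u s1 a4
    using smooth lax_x lax_t by unfold_locales
  define s2 where "s2 = lax_s2 (u 0 0) (ux 0 0) s1 a4"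
  define s3 where "s3 = lax_s3 (u 0 0) (ux 0 0) s1 a4"
  define f where "f \<xi> = (cmod (u \<xi> 0))^2" for \<xi>
  have f': "(f has_real_derivative 2 * Re (cnj (u \<xi> 0) * ux \<xi> 0)) (at \<xi>)" for \<xi>
    unfolding f_def by (rule has_real_derivative_cmod_power2[OF has_vector_derivative_u_x])
  show ?thesis
  proof (intro exI conjI allI)
    show "det (Lmat u s1 a4 x t lam)
        = - (lam^8) + of_real s1 * lam^6 - of_real s2 * lam^4 + of_real s3 * lam^2 - of_real (a4^2)"
      for x t lam
      by (simp add: Lmat_eq det_lax_L s2_def s3_def lax_s2_const[of x t] lax_s3_const[of x t])
    show "(cmod (u x t))^2 = f (x + 2 * s1 * t)" for x t
      unfolding f_def by (rule cmod_u_power2_travelling)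
    fix \<xi>
    show "f differentiable (at \<xi>)"
      using f' real_differentiable_def by blast
    show "(deriv f \<xi>)^2 = - Rpoly s1 s2 s3 a4 (f \<xi>)"
      using cmod_power2_deriv_sq_eq_Rpoly[of "u \<xi> 0" "ux \<xi> 0" s1 a4]
      by (simp add: DERIV_imp_deriv[OF f'] f_def s2_def s3_def lax_s2_const[of \<xi> 0] lax_s3_const[of \<xi> 0])
  qed
qed

end
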